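(* Let $C$ be a cake, $S$ a family of usable pieces, and $C_0\subseteq C_1\subseteq C$ pieces. Let $K$ be an $S$-good knife function on $C$ from $C_0$ to $C_1$. Let two agents $A,B$ have value measures $V_A,V_B$ on $C$ normalized so that $V_A(C)=V_B(C)=1$, and suppose that for each $i\in\{A,B\}$: $V_i^S(C_0)\le V_i^S(C\setminus C_0)$ and $V_i^S(C_1)\ge V_i^S(C\setminus C_1)$. Then for each $i$ there is $t_i\in[0,1]$ with $V_i^S(K(t_i))=V_i^S(C\setminus K(t_i))$; after renaming the agents so that $t_A\le t_B$, for every $t^*\in[t_A,t_B]$, giving $K(t^* )$ to $A$ and $C\setminus K(t^* )$ to $B$ yields a division in which each agent's $S$-value of his own piece is at least his $S$-value of the other piece, and each agent $i$'s $S$-value of his own piece is at least $$\max\Big(V_i^S(C_0),\ V_i^S(C\setminus C_1),\ \frac{1}{\mathrm{Loss}(K,S)}\Big).$$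
   Context: A cake is a Borel subset $C\subseteq\mathbb{R}^d$; a piece is a Borel subset of $\mathbb{R}^d$. A value measure on $C$ is $V(X)=\int_X v$ with $v$ non-negative, bounded, integrable on $C$, $V(C)<\infty$. $S$ is a family of pieces; $V^S(X):=\sup\{V(s):s\in S, s\subseteq X\}$. $\mathrm{Loss}(X,S):=\sup_V V(X)/V^S(X)$ over finite Lebesgue-absolutely-continuous measures $V$ with $V^S(X)>0$ ($\infty$ if unbounded). A knife function on $C$ is a map $K$ from $[0,1]$ to Borel subsets of $C$ with $K(t)\subseteq K(t')$ whenever $t\le t'$; it is a knife function from $C_0$ to $C_1$ if $K(0)=C_0$ and $K(1)=C_1$. Its complement is $\overline{K}(t):=C\setminus K(t)$. $K$ is $S$-good if for every finite measure $V$ absolutely continuous w.r.t. Lebesgue measure, both $t\mapsto V^S(K(t))$ and $t\mapsto V^S(\overline K(t))$ are continuous. The geometric loss of $K$ is $\mathrm{Loss}(K,S):=\sup_{t\in[0,1]}\big(\mathrm{Loss}(K(t),S)+\mathrm{Loss}(\overline K(t),S)\big)$. *)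

theory Defs
  imports "HOL-Analysis.Analysis"
begin

text \<open>Cakes and pieces live in a Euclidean space 'a (standing for R^d).
  A value measure on a cake C is given by a density v on C.\<close>

definition value_density :: "'a::euclidean_space set \<Rightarrow> ('a \<Rightarrow> real) \<Rightarrow> bool" where
  "value_density C v \<longleftrightarrow> v \<in> borel_measurable borel \<and> (\<forall>x\<in>C. 0 \<le> v x)
     \<and> bounded (v ` C) \<and> set_integrable lborel C v"

definition value_measure :: "'a::euclidean_space set \<Rightarrow> ('a \<Rightarrow> real) \<Rightarrow> 'a measure" where
  "value_measure C v = density lborel (\<lambda>x. ennreal (indicator C x * v x))"

definition fin_ac_measure :: "'a::euclidean_space measure \<Rightarrow> bool" where
  "fin_ac_measure V \<longleftrightarrow> sets V = sets borel \<and> finite_measure V \<and> absolutely_continuous lborel V"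

definition VS :: "'a measure \<Rightarrow> 'a set set \<Rightarrow> 'a set \<Rightarrow> real" where
  "VS V S X = Sup (insert 0 (measure V ` {s \<in> S. s \<subseteq> X}))"

definition Loss :: "'a::euclidean_space set \<Rightarrow> 'a set set \<Rightarrow> ereal" where
  "Loss X S = (SUP V \<in> {V. fin_ac_measure V \<and> VS V S X > 0}. ereal (measure V X / VS V S X))"

definition knife_function :: "'a::euclidean_space set \<Rightarrow> (real \<Rightarrow> 'a set) \<Rightarrow> bool" where
  "knife_function C K \<longleftrightarrow> (\<forall>t\<in>{0..1}. K t \<in> sets borel \<and> K t \<subseteq> C)
     \<and> (\<forall>t\<in>{0..1}. \<forall>t'\<in>{0..1}. t \<le> t' \<longrightarrow> K t \<subseteq> K t')"

definition knife_from_to :: "'a::euclidean_space set \<Rightarrow> (real \<Rightarrow> 'a set) \<Rightarrow> 'a set \<Rightarrow> 'a set \<Rightarrow> bool" where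
  "knife_from_to C K C0 C1 \<longleftrightarrow> knife_function C K \<and> K 0 = C0 \<and> K 1 = C1"

definition S_good :: "'a::euclidean_space set \<Rightarrow> 'a set set \<Rightarrow> (real \<Rightarrow> 'a set) \<Rightarrow> bool" where
  "S_good C S K \<longleftrightarrow> (\<forall>V. fin_ac_measure V \<longrightarrow>
      continuous_on {0..1} (\<lambda>t. VS V S (K t)) \<and> continuous_on {0..1} (\<lambda>t. VS V S (C - K t)))"

definition knife_Loss :: "'a::euclidean_space set \<Rightarrow> (real \<Rightarrow> 'a set) \<Rightarrow> 'a set set \<Rightarrow> ereal" where
  "knife_Loss C K S = (SUP t\<in>{0..1}. Loss (K t) S + Loss (C - K t) S)"

end

theory Submission
  imports Defs
begin

text \<open>The equalizing cuts tA and tB exist by the intermediate value theorem, and between them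
  monotonicity of the knife makes the division envy-free and bounds each agent's share by
  V^S(C0) and V^S(C - C1). For the bound by 1/Loss, note first that V(X) \<le> Loss(X) V^S(X)
  for every piece X containing a usable piece of positive measure: if V^S(X) = 0 < V(X), adding a
  large multiple of V to a measure that sees a usable piece in X makes Loss(X) infinite. When both
  sides of the cut at t are of this kind, adding the two inequalities gives
  1 \<le> (Loss(K t) + Loss(C - K t)) max(V^S(K t), V^S(C - K t)) \<le> Loss(K) V^S(own piece).
  Both sides are of this kind for t between the equalizing cuts: otherwise, say, C - K t is
  invisible to S, the cut of agent B is past every visible complement, so B's whole value lies in
  C - K tB, and V_B^S(C - K s) would jump from at least 1/Loss(K) to 0 as s increases, contradicting
  the S-goodness of the knife.\<close>

definition add_measure :: "'a measure \<Rightarrow> 'a measure \<Rightarrow> 'a measure" where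
  "add_measure M N = measure_of (space M) (sets M) (\<lambda>A. emeasure M A + emeasure N A)"

lemma sets_add_measure [simp]: "sets (add_measure M N) = sets M"
  by (simp add: add_measure_def)

lemma space_add_measure [simp]: "space (add_measure M N) = space M"
  by (simp add: add_measure_def)

lemma emeasure_add_measure:
  assumes "sets N = sets M"
  shows "emeasure (add_measure M N) A = emeasure M A + emeasure N A"
proof (cases "A \<in> sets M")
  case True
  show ?thesis unfolding add_measure_def
  proof (rule emeasure_measure_of_sigma)
    show "sigma_algebra (space M) (sets M)" ..
    show "positive (sets M) (\<lambda>A. emeasure M A + emeasure N A)"
      by (simp add: positive_def)
    show "countably_additive (sets M) (\<lambda>A. emeasure M A + emeasure N A)"
    proof (rule countably_additiveI)
      fix A :: "nat \<Rightarrow> _" assume "range A \<subseteq> sets M" "disjoint_family A"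
      then show "(\<Sum>i. emeasure M (A i) + emeasure N (A i)) = emeasure M (\<Union>i. A i) + emeasure N (\<Union>i. A i)"
        using assms by (simp add: suminf_add [symmetric] suminf_emeasure)
    qed
  qed (fact True)
qed (use assms in \<open>simp add: emeasure_notin_sets\<close>)

lemma measure_add_measure:
  assumes "sets N = sets M" "finite_measure M" "finite_measure N"
  shows "measure (add_measure M N) A = measure M A + measure N A"
proof -
  have "emeasure M A < \<infinity>" "emeasure N A < \<infinity>"
    using finite_measure.emeasure_finite[OF assms(2), of A] finite_measure.emeasure_finite[OF assms(3), of A]
    by (simp_all add: top.not_eq_extremum)
  then show ?thesis
    by (simp add: measure_def emeasure_add_measure[OF assms(1)] enn2real_plus)
qed

lemma fin_ac_measure_add_measure:
  assumes "fin_ac_measure M" "fin_ac_measure N"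
  shows "fin_ac_measure (add_measure M N)"
proof -
  have sets: "sets N = sets M" "sets M = sets borel"
    using assms by (simp_all add: fin_ac_measure_def)
  have fin: "finite_measure M" "finite_measure N"
    using assms by (simp_all add: fin_ac_measure_def)
  have "emeasure (add_measure M N) (space (add_measure M N)) < \<infinity>"
    using fin by (simp add: emeasure_add_measure[OF sets(1)] less_top[symmetric]
        finite_measure.emeasure_finite)
  moreover have "null_sets lborel \<subseteq> null_sets (add_measure M N)"
    using assms sets by (auto simp: fin_ac_measure_def absolutely_continuous_def
        null_sets_def emeasure_add_measure)
  ultimately show ?thesis
    using sets by (auto simp: fin_ac_measure_def absolutely_continuous_def intro: finite_measureI)
qed

lemma fin_ac_measure_scale_measure:
  assumes "fin_ac_measure M"
  shows "fin_ac_measure (scale_measure (ennreal r) M)"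
proof -
  have "finite_measure M"
    using assms by (simp add: fin_ac_measure_def)
  then have "emeasure (scale_measure (ennreal r) M) (space M) < \<infinity>"
    by (simp add: less_top[symmetric] ennreal_mult_eq_top_iff finite_measure.emeasure_finite)
  moreover have "null_sets lborel \<subseteq> null_sets (scale_measure (ennreal r) M)"
    using assms by (auto simp: fin_ac_measure_def absolutely_continuous_def null_sets_def)
  ultimately show ?thesis
    using assms by (auto simp: fin_ac_measure_def absolutely_continuous_def space_scale_measure
        intro: finite_measureI)
qed

lemma fin_ac_measure_value_measure:
  assumes "value_density C v"
  shows "fin_ac_measure (value_measure C v)"
proof -
  have int: "integrable lborel (\<lambda>x. indicator C x *\<^sub>R v x)"
    using assms by (simp add: value_density_def set_integrable_def)
  have "\<And>x. norm (indicator C x *\<^sub>R v x) = indicator C x * v x"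
    using assms by (auto simp: value_density_def indicator_def)
  then have "(\<integral>\<^sup>+x. ennreal (indicator C x * v x) \<partial>lborel) < \<infinity>"
    using integrableD(2)[OF int] by (simp add: less_top)
  moreover have meas: "(\<lambda>x. indicator C x * v x) \<in> borel_measurable lborel"
    using borel_measurable_integrable[OF int] by simp
  ultimately have "finite_measure (value_measure C v)"
    by (intro finite_measureI) (simp add: value_measure_def emeasure_density)
  moreover have "absolutely_continuous lborel (value_measure C v)"
    unfolding value_measure_def
    by (rule absolutely_continuousI_density) (use meas in \<open>auto simp: measurable_lborel1\<close>)
  ultimately show ?thesis
    by (simp add: fin_ac_measure_def value_measure_def)
qed

lemma bdd_above_measure_image:
  assumes "finite_measure V"
  shows "bdd_above (measure V ` A)"
proof -
  have "measure V B \<le> measure V (space V)" for B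
    using assms by (cases "B \<in> sets V")
      (auto intro: finite_measure.finite_measure_mono dest: sets.sets_into_space simp: measure_notin_sets)
  then show ?thesis
    by (auto intro!: bdd_aboveI[where M = "measure V (space V)"])
qed

lemma VS_nonneg: "finite_measure V \<Longrightarrow> 0 \<le> VS V S X"
  unfolding VS_def by (rule cSup_upper) (auto intro: bdd_above_measure_image)

lemma VS_upper: "finite_measure V \<Longrightarrow> s \<in> S \<Longrightarrow> s \<subseteq> X \<Longrightarrow> measure V s \<le> VS V S X"
  unfolding VS_def by (rule cSup_upper) (auto intro: bdd_above_measure_image)

lemma VS_mono: "finite_measure V \<Longrightarrow> X \<subseteq> Y \<Longrightarrow> VS V S X \<le> VS V S Y"
  unfolding VS_def by (rule cSup_subset_mono) (auto intro: bdd_above_measure_image)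

lemma VS_least: "0 \<le> c \<Longrightarrow> (\<And>s. s \<in> S \<Longrightarrow> s \<subseteq> X \<Longrightarrow> measure V s \<le> c) \<Longrightarrow> VS V S X \<le> c"
  unfolding VS_def by (rule cSup_least) auto

lemma VS_le_measure:
  "finite_measure V \<Longrightarrow> S \<subseteq> sets V \<Longrightarrow> X \<in> sets V \<Longrightarrow> VS V S X \<le> measure V X"
  by (rule VS_least) (auto intro: finite_measure.finite_measure_mono)

definition S_nonnull :: "'a::euclidean_space set set \<Rightarrow> 'a set \<Rightarrow> bool" where
  "S_nonnull S X \<longleftrightarrow> (\<exists>V. fin_ac_measure V \<and> 0 < VS V S X)"

lemma S_nonnull_mono: "S_nonnull S X \<Longrightarrow> X \<subseteq> Y \<Longrightarrow> S_nonnull S Y"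
  unfolding S_nonnull_def fin_ac_measure_def by (meson VS_mono less_le_trans)

lemma VS_eq_0_if_not_S_nonnull: "\<not> S_nonnull S X \<Longrightarrow> fin_ac_measure V \<Longrightarrow> VS V S X = 0"
  unfolding S_nonnull_def fin_ac_measure_def by (meson VS_nonneg not_less order.antisym)

lemma Loss_eq_minf_if_not_S_nonnull:
  assumes "\<not> S_nonnull S X"
  shows "Loss X S = -\<infinity>"
proof -
  have no_measure: "{V. fin_ac_measure V \<and> 0 < VS V S X} = {}"
    using assms by (auto simp: S_nonnull_def)
  show ?thesis
    unfolding Loss_def no_measure by (simp add: bot_ereal_def)
qed

lemma ratio_le_Loss: "fin_ac_measure V \<Longrightarrow> 0 < VS V S X \<Longrightarrow> ereal (measure V X / VS V S X) \<le> Loss X S"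
  unfolding Loss_def by (rule SUP_upper) auto

lemma one_le_Loss:
  assumes "S_nonnull S X" "X \<in> sets borel" "S \<subseteq> sets borel"
  shows "1 \<le> Loss X S"
proof -
  obtain V where V: "fin_ac_measure V" "0 < VS V S X"
    using assms(1) by (auto simp: S_nonnull_def)
  then have "VS V S X \<le> measure V X"
    using assms by (intro VS_le_measure) (auto simp: fin_ac_measure_def)
  with V have "ereal 1 \<le> ereal (measure V X / VS V S X)"
    by simp
  also have "\<dots> \<le> Loss X S"
    using V by (rule ratio_le_Loss)
  finally show ?thesis
    by (simp add: one_ereal_def)
qed

lemma Loss_eq_infinity_if_VS_eq_0:
  assumes V: "fin_ac_measure V" and nonnull: "S_nonnull S X"
    and VS_0: "VS V S X = 0" and pos: "0 < measure V X"
  shows "Loss X S = \<infinity>"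
proof (rule ereal_top)
  fix r :: real
  obtain W where W: "fin_ac_measure W" "0 < VS W S X"
    using nonnull by (auto simp: S_nonnull_def)
  have fin: "finite_measure V" "finite_measure W"
    using V W by (simp_all add: fin_ac_measure_def)
  show "ereal r \<le> Loss X S"
  proof (cases "r \<le> 0")
    case True
    have "0 \<le> measure W X / VS W S X"
      using W(2) by simp
    then have "ereal r \<le> ereal (measure W X / VS W S X)"
      using True by simp
    also have "\<dots> \<le> Loss X S"
      using W by (rule ratio_le_Loss)
    finally show ?thesis .
  next
    case False
    define c where "c = r * VS W S X / measure V X"
    have c: "0 \<le> c"
      using False W pos by (simp add: c_def)
    define U where "U = add_measure W (scale_measure (ennreal c) V)"
    have U: "fin_ac_measure U"
      unfolding U_def using V W by (intro fin_ac_measure_add_measure fin_ac_measure_scale_measure)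
    have measure_U: "measure U A = measure W A + c * measure V A" for A
      unfolding U_def using V W fin_ac_measure_scale_measure[OF V, of c] c
      by (subst measure_add_measure) (simp_all add: fin_ac_measure_def)
    have V_pieces: "measure V s = 0" if "s \<in> S" "s \<subseteq> X" for s
      using VS_upper[OF fin(1) that] VS_0 measure_nonneg[of V s] by simp
    have "VS U S X \<le> VS W S X"
      using W V_pieces VS_upper[OF fin(2)] VS_nonneg[OF fin(2)]
      by (intro VS_least) (simp_all add: measure_U)
    moreover have "VS W S X \<le> VS U S X"
    proof (rule VS_least)
      have fin_U: "finite_measure U"
        using U by (simp add: fin_ac_measure_def)
      then show "0 \<le> VS U S X"
        by (rule VS_nonneg)
      show "measure W s \<le> VS U S X" if "s \<in> S" "s \<subseteq> X" for s
      proof -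
        have "measure W s \<le> measure U s"
          using c by (simp add: measure_U)
        also have "\<dots> \<le> VS U S X"
          using fin_U that by (rule VS_upper)
        finally show ?thesis .
      qed
    qed
    ultimately have VS_U: "VS U S X = VS W S X"
      by simp
    have "r \<le> c * measure V X / VS W S X"
      using W pos by (simp add: c_def)
    also have "\<dots> \<le> measure U X / VS U S X"
      using W by (simp add: VS_U measure_U divide_right_mono)
    finally have "ereal r \<le> ereal (measure U X / VS U S X)"
      by simp
    also have "\<dots> \<le> Loss X S"
      using U W(2) VS_U by (intro ratio_le_Loss) simp_all
    finally show ?thesis .
  qed
qed

lemma measure_le_Loss_mult_VS:
  assumes V: "fin_ac_measure V" and nonnull: "S_nonnull S X" and Loss: "Loss X S = ereal l"
  shows "measure V X \<le> l * VS V S X"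
proof (cases "0 < VS V S X")
  case True
  then have "measure V X / VS V S X \<le> l"
    using ratio_le_Loss[OF V True] Loss by simp
  then show ?thesis
    using True by (simp add: divide_le_eq mult.commute)
next
  case False
  then have "VS V S X = 0"
    using V VS_nonneg[of V S X] by (simp add: fin_ac_measure_def)
  moreover have "\<not> 0 < measure V X"
    using Loss_eq_infinity_if_VS_eq_0[OF V nonnull \<open>VS V S X = 0\<close>] Loss by auto
  ultimately show ?thesis
    by simp
qed

lemma continuous_on_gap_zero_iff:
  fixes g :: "real \<Rightarrow> real"
  assumes cont: "continuous_on {u..w} g" and "u \<le> w" and "0 < c"
    and gap: "\<And>s. s \<in> {u..w} \<Longrightarrow> g s = 0 \<or> c \<le> g s"
  shows "g u = 0 \<longleftrightarrow> g w = 0"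
proof -
  have no_half: "g x \<noteq> c / 2" if "u \<le> x" "x \<le> w" for x
    using gap[of x] that \<open>0 < c\<close> by auto
  show ?thesis
  proof
    assume "g u = 0"
    show "g w = 0"
    proof (rule ccontr)
      assume "g w \<noteq> 0"
      then have "c / 2 \<le> g w"
        using gap[of w] \<open>u \<le> w\<close> \<open>0 < c\<close> by auto
      then show False
        using IVT'[of g u "c / 2" w] \<open>g u = 0\<close> \<open>0 < c\<close> \<open>u \<le> w\<close> cont no_half by auto
    qed
  next
    assume "g w = 0"
    show "g u = 0"
    proof (rule ccontr)
      assume "g u \<noteq> 0"
      then have "c / 2 \<le> g u"
        using gap[of u] \<open>u \<le> w\<close> \<open>0 < c\<close> by auto
      then show False
        using IVT2'[of g w "c / 2" u] \<open>g w = 0\<close> \<open>0 < c\<close> \<open>u \<le> w\<close> cont no_half by auto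
    qed
  qed
qed

lemma inverse_ereal_le_if_one_le_mult:
  assumes "1 \<le> l * x" "0 \<le> x"
  shows "inverse (ereal l) \<le> ereal x"
proof -
  have "0 < l"
    using assms by (smt (verit) mult_nonpos_nonneg)
  then show ?thesis
    using assms by (simp add: field_simps)
qed

lemma Loss_add_Loss_le_knife_Loss:
  "t \<in> {0..1} \<Longrightarrow> Loss (K t) S + Loss (C - K t) S \<le> knife_Loss C K S"
  unfolding knife_Loss_def by (rule SUP_upper)

lemma ex_balanced_cut:
  fixes K :: "real \<Rightarrow> 'a set"
  assumes cont: "continuous_on {0..1} (\<lambda>t. VS V S (K t))" "continuous_on {0..1} (\<lambda>t. VS V S (C - K t))"
    and start: "VS V S (K 0) \<le> VS V S (C - K 0)" and stop: "VS V S (C - K 1) \<le> VS V S (K 1)"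
  shows "\<exists>t\<in>{0..1}. VS V S (K t) = VS V S (C - K t)"
proof -
  have diff: "continuous_on {0..1} (\<lambda>t. VS V S (K t) - VS V S (C - K t))"
    using cont by (intro continuous_on_diff)
  have "\<exists>t. 0 \<le> t \<and> t \<le> 1 \<and> VS V S (K t) - VS V S (C - K t) = 0"
    by (rule IVT'[OF _ _ _ diff]) (use start stop in auto)
  then show ?thesis
    by auto
qed

context
  fixes C :: "'a::euclidean_space set" and K :: "real \<Rightarrow> 'a set"
  assumes knife: "knife_function C K"
begin

lemma knife_mono:
  assumes "t \<in> {0..1}" "t' \<in> {0..1}" "t \<le> t'"
  shows "K t \<subseteq> K t'" and "C - K t' \<subseteq> C - K t"
proof -
  show "K t \<subseteq> K t'"
    using knife assms by (simp add: knife_function_def)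
  then show "C - K t' \<subseteq> C - K t"
    by blast
qed

lemma VS_complement_le_VS_after:
  assumes "finite_measure V" "tA \<in> {0..1}" "t \<in> {0..1}" "tA \<le> t"
    and "VS V S (C - K tA) \<le> VS V S (K tA)"
  shows "VS V S (C - K t) \<le> VS V S (K t)"
  using VS_mono[OF assms(1) knife_mono(2)[OF assms(2-4)], of S]
    VS_mono[OF assms(1) knife_mono(1)[OF assms(2-4)], of S] assms(5)
  by linarith

lemma VS_le_VS_complement_before:
  assumes "finite_measure V" "t \<in> {0..1}" "tB \<in> {0..1}" "t \<le> tB"
    and "VS V S (K tB) \<le> VS V S (C - K tB)"
  shows "VS V S (K t) \<le> VS V S (C - K t)"
  using VS_mono[OF assms(1) knife_mono(2)[OF assms(2-4)], of S]
    VS_mono[OF assms(1) knife_mono(1)[OF assms(2-4)], of S] assms(5)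
  by linarith

context
  fixes S :: "'a set set"
  assumes cake: "C \<in> sets borel" and pieces: "S \<subseteq> sets borel"
begin

lemma knife_sets:
  assumes "t \<in> {0..1}"
  shows "K t \<in> sets borel" and "C - K t \<in> sets borel"
  using knife cake assms by (auto simp: knife_function_def)

lemma measure_knife_split:
  assumes "fin_ac_measure V" "t \<in> {0..1}"
  shows "measure V (K t) + measure V (C - K t) = measure V C"
  using assms knife cake
  by (simp add: fin_ac_measure_def knife_function_def finite_measure.finite_measure_Diff)

text \<open>In ereal, \<infinity> + -\<infinity> = \<infinity>; so a finite knife loss bounds the loss of each side, even
  when the other side has loss -\<infinity>.\<close>

lemma Loss_real_if_knife_Loss_real:
  assumes Loss: "knife_Loss C K S = ereal l" and t: "t \<in> {0..1}"
    and side: "X = K t \<or> X = C - K t" and nonnull: "S_nonnull S X"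
  shows "\<exists>l'. Loss X S = ereal l' \<and> 1 \<le> l'"
proof -
  have "1 \<le> Loss X S"
    using side knife_sets[OF t] by (intro one_le_Loss[OF nonnull _ pieces]) auto
  moreover have "Loss X S \<noteq> \<infinity>"
    using Loss_add_Loss_le_knife_Loss[OF t, of K S C] Loss side by auto
  ultimately show ?thesis
    by (cases "Loss X S") auto
qed

lemma measure_knife_sides_le:
  assumes V: "fin_ac_measure V" and Loss: "knife_Loss C K S = ereal l" and t: "t \<in> {0..1}"
    and nonnull: "S_nonnull S (K t)" "S_nonnull S (C - K t)"
  obtains l1 l2 where "1 \<le> l1" "1 \<le> l2" "l1 + l2 \<le> l"
    and "measure V (K t) \<le> l1 * VS V S (K t)" "measure V (C - K t) \<le> l2 * VS V S (C - K t)"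
proof -
  obtain l1 where l1: "Loss (K t) S = ereal l1" "1 \<le> l1"
    using Loss_real_if_knife_Loss_real[OF Loss t disjI1[OF refl] nonnull(1)] by blast
  obtain l2 where l2: "Loss (C - K t) S = ereal l2" "1 \<le> l2"
    using Loss_real_if_knife_Loss_real[OF Loss t disjI2[OF refl] nonnull(2)] by blast
  show ?thesis
  proof (rule that)
    show "l1 + l2 \<le> l"
      using Loss_add_Loss_le_knife_Loss[OF t, of K S C] Loss l1 l2 by simp
    show "measure V (K t) \<le> l1 * VS V S (K t)"
      using measure_le_Loss_mult_VS[OF V nonnull(1) l1(1)] .
    show "measure V (C - K t) \<le> l2 * VS V S (C - K t)"
      using measure_le_Loss_mult_VS[OF V nonnull(2) l2(1)] .
  qed (use l1 l2 in auto)
qed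

lemma ex_S_nonnull_sides:
  assumes Loss: "knife_Loss C K S = ereal l"
  shows "\<exists>t\<in>{0..1}. S_nonnull S (K t) \<and> S_nonnull S (C - K t)"
proof (rule ccontr)
  assume none: "\<not> ?thesis"
  have "Loss (K t) S + Loss (C - K t) S = -\<infinity>" if t: "t \<in> {0..1}" for t
  proof -
    have "Loss (K t) S \<noteq> \<infinity>" "Loss (C - K t) S \<noteq> \<infinity>"
      using Loss_add_Loss_le_knife_Loss[OF t, of K S C] Loss by auto
    moreover have "Loss (K t) S = -\<infinity> \<or> Loss (C - K t) S = -\<infinity>"
      using none t Loss_eq_minf_if_not_S_nonnull by blast
    ultimately show ?thesis
      by (cases "Loss (K t) S"; cases "Loss (C - K t) S") auto
  qed
  then have "knife_Loss C K S \<le> -\<infinity>"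
    unfolding knife_Loss_def by (intro SUP_least) simp
  with Loss show False
    by simp
qed

lemma inverse_knife_Loss_le_max_VS:
  assumes V: "fin_ac_measure V" and norm: "measure V C = 1" and t: "t \<in> {0..1}"
    and nonnull: "S_nonnull S (K t)" "S_nonnull S (C - K t)"
  shows "inverse (knife_Loss C K S) \<le> ereal (max (VS V S (K t)) (VS V S (C - K t)))"
proof (cases "knife_Loss C K S")
  case (real l)
  let ?m = "max (VS V S (K t)) (VS V S (C - K t))"
  obtain l1 l2 where l: "1 \<le> l1" "1 \<le> l2" "l1 + l2 \<le> l"
    and sides: "measure V (K t) \<le> l1 * VS V S (K t)" "measure V (C - K t) \<le> l2 * VS V S (C - K t)"
    using measure_knife_sides_le[OF V real t nonnull] by blast
  have m: "0 \<le> ?m"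
    using V by (simp add: fin_ac_measure_def VS_nonneg le_max_iff_disj)
  have "1 = measure V (K t) + measure V (C - K t)"
    using measure_knife_split[OF V t] norm by simp
  also have "\<dots> \<le> l1 * ?m + l2 * ?m"
    using sides l by (smt (verit) max.cobounded1 max.cobounded2 mult_left_mono)
  also have "\<dots> \<le> l * ?m"
    using l m by (simp add: mult_right_mono flip: distrib_right)
  finally show ?thesis
    unfolding real by (rule inverse_ereal_le_if_one_le_mult[OF _ m])
qed (use V in \<open>simp_all add: fin_ac_measure_def VS_nonneg le_max_iff_disj\<close>)

text \<open>Otherwise all of the agent's value lies in C - K tB, whose S-value is 0, while every S-nonnull
  complement before tB carries value at least 1 and hence S-value at least 1/l: the S-value of
  the complement would jump from at least 1/l to 0, contradicting continuity.\<close>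

lemma S_nonnull_complement_before:
  assumes V: "fin_ac_measure V" and norm: "measure V C = 1"
    and cont: "continuous_on {0..1} (\<lambda>s. VS V S (C - K s))"
    and Loss: "knife_Loss C K S = ereal l"
    and tB: "tB \<in> {0..1}" and pref: "VS V S (K tB) \<le> VS V S (C - K tB)"
    and t: "t \<in> {0..1}" "t \<le> tB"
  shows "S_nonnull S (C - K t)"
proof (rule ccontr)
  assume null: "\<not> S_nonnull S (C - K t)"
  have fin: "finite_measure V"
    using V by (simp add: fin_ac_measure_def)
  obtain s0 where s0: "s0 \<in> {0..1}" "S_nonnull S (K s0)" "S_nonnull S (C - K s0)"
    using ex_S_nonnull_sides[OF Loss] by blast
  have "s0 < t"
    using null s0 t knife_mono(2)[of t s0] S_nonnull_mono by force
  then have nonnull_tB: "S_nonnull S (K tB)"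
    using s0 tB t knife_mono(1)[of s0 tB] S_nonnull_mono by force
  have "\<not> S_nonnull S (C - K tB)"
    using null t tB knife_mono(2)[of t tB] S_nonnull_mono by blast
  then have "VS V S (K tB) = 0"
    using VS_eq_0_if_not_S_nonnull[OF _ V] pref VS_nonneg[OF fin] by (metis order.antisym)
  moreover obtain l' where "Loss (K tB) S = ereal l'"
    using Loss_real_if_knife_Loss_real[OF Loss tB _ nonnull_tB] by blast
  ultimately have "measure V (K tB) \<le> 0"
    using measure_le_Loss_mult_VS[OF V nonnull_tB] by simp
  then have mass_tB: "1 \<le> measure V (C - K tB)"
    using measure_knife_split[OF V tB] norm by simp
  define g where "g s = VS V S (C - K s)" for s
  have bound: "1 \<le> l * g s" if s: "s \<in> {s0..t}" and nonnull_s: "S_nonnull S (C - K s)" for s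
  proof -
    have s01: "s \<in> {0..1}"
      using s s0 t by auto
    have "S_nonnull S (K s)"
      using s s0 s01 knife_mono(1)[of s0 s] S_nonnull_mono by force
    then obtain l1 l2 where l: "1 \<le> l1" "l1 + l2 \<le> l"
      and side: "measure V (C - K s) \<le> l2 * g s"
      using measure_knife_sides_le[OF V Loss s01 _ nonnull_s] unfolding g_def by blast
    have "measure V (C - K tB) \<le> measure V (C - K s)"
      using V s s01 t tB knife_mono(2)[of s tB] knife_sets(2)[OF s01]
      by (intro finite_measure.finite_measure_mono[OF fin]) (auto simp: fin_ac_measure_def)
    moreover have "l2 * g s \<le> l * g s"
      using l VS_nonneg[OF fin] by (intro mult_right_mono) (auto simp: g_def)
    ultimately show ?thesis
      using mass_tB side by linarith
  qed
  have "0 < l"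
    using bound[of s0] s0 \<open>s0 < t\<close> VS_nonneg[OF fin, of S "C - K s0"]
    by (smt (verit) atLeastAtMost_iff g_def mult_nonpos_nonneg)
  have "g s0 = 0 \<longleftrightarrow> g t = 0"
  proof (rule continuous_on_gap_zero_iff[where g = g and c = "1 / l"])
    show "continuous_on {s0..t} g"
      unfolding g_def by (rule continuous_on_subset[OF cont]) (use s0 t in auto)
    show "g s = 0 \<or> 1 / l \<le> g s" if "s \<in> {s0..t}" for s
      using bound[OF that] VS_eq_0_if_not_S_nonnull[OF _ V] \<open>0 < l\<close>
      by (auto simp: g_def field_simps)
  qed (use \<open>s0 < t\<close> \<open>0 < l\<close> in auto)
  moreover have "g t = 0"
    using VS_eq_0_if_not_S_nonnull[OF null V] by (simp add: g_def)
  moreover have "1 \<le> l * g s0"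
    using bound[of s0] s0 \<open>s0 < t\<close> by simp
  ultimately show False
    by simp
qed

end

end

lemma knife_function_reflect:
  assumes "C \<in> sets borel" "knife_function C K"
  shows "knife_function C (\<lambda>s. C - K (1 - s))"
  unfolding knife_function_def
proof (intro conjI ballI impI)
  fix t t' :: real
  assume "t \<in> {0..1}" "t' \<in> {0..1}" "t \<le> t'"
  then have "K (1 - t') \<subseteq> K (1 - t)"
    using assms(2) by (simp add: knife_function_def)
  then show "C - K (1 - t) \<subseteq> C - K (1 - t')"
    by blast
next
  fix t :: real
  assume "t \<in> {0..1}"
  then show "C - K (1 - t) \<in> sets borel" "C - K (1 - t) \<subseteq> C"
    using assms by (auto simp: knife_function_def)
qed

lemma knife_Loss_reflect:
  assumes "knife_function C K"
  shows "knife_Loss C (\<lambda>s. C - K (1 - s)) S = knife_Loss C K S"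
proof -
  have "C - (C - K (1 - t)) = K (1 - t)" if "t \<in> {0..1}" for t
    using assms that by (auto simp: knife_function_def)
  then have "knife_Loss C (\<lambda>s. C - K (1 - s)) S
      = (SUP t\<in>{0..1}. Loss (K (1 - t)) S + Loss (C - K (1 - t)) S)"
    unfolding knife_Loss_def by (intro SUP_cong) (simp_all add: add.commute)
  also have "\<dots> = (SUP t\<in>(\<lambda>t. 1 - t) ` {0..1}. Loss (K t) S + Loss (C - K t) S)"
    by (simp only: image_image)
  also have "(\<lambda>t. 1 - t) ` {0..1::real} = {0..1}"
    by (simp add: image_diff_atLeastAtMost)
  finally show ?thesis
    by (simp add: knife_Loss_def)
qed

text \<open>The reflected knife s \<mapsto> C - K (1 - s) exchanges the two sides of every cut.\<close>

lemma S_nonnull_after: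
  assumes cake: "C \<in> sets borel" and pieces: "S \<subseteq> sets borel" and knife: "knife_function C K"
    and V: "fin_ac_measure V" and norm: "measure V C = 1"
    and cont: "continuous_on {0..1} (\<lambda>s. VS V S (K s))"
    and Loss: "knife_Loss C K S = ereal l"
    and tA: "tA \<in> {0..1}" and pref: "VS V S (C - K tA) \<le> VS V S (K tA)"
    and t: "t \<in> {0..1}" "tA \<le> t"
  shows "S_nonnull S (K t)"
proof -
  let ?K = "\<lambda>s. C - K (1 - s)"
  have complement: "C - ?K s = K (1 - s)" if "s \<in> {0..1}" for s
    using knife that by (auto simp: knife_function_def)
  have "S_nonnull S (C - ?K (1 - t))"
  proof (rule S_nonnull_complement_before[OF knife_function_reflect[OF cake knife] cake pieces V norm,
        where tB = "1 - tA"])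
    have "continuous_on {0..1} (\<lambda>s. VS V S (K (1 - s)))"
      by (rule continuous_on_compose2[OF cont]) (auto intro!: continuous_intros)
    then show "continuous_on {0..1} (\<lambda>s. VS V S (C - ?K s))"
      by (rule continuous_on_cong[THEN iffD1, rotated 2]) (simp_all add: complement)
    show "knife_Loss C ?K S = ereal l"
      using knife_Loss_reflect[OF knife] Loss by simp
  qed (use tA t pref complement[of "1 - tA"] in auto)
  then show ?thesis
    using complement[of "1 - t"] t by simp
qed

lemma division_between_balanced_cuts:
  assumes cake: "C \<in> sets borel" and pieces: "S \<subseteq> sets borel"
    and knife: "knife_from_to C K C0 C1"
    and VA: "fin_ac_measure VA" "measure VA C = 1" "continuous_on {0..1} (\<lambda>s. VS VA S (K s))"
    and VB: "fin_ac_measure VB" "measure VB C = 1" "continuous_on {0..1} (\<lambda>s. VS VB S (C - K s))"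
    and tA: "tA \<in> {0..1}" "VS VA S (C - K tA) \<le> VS VA S (K tA)"
    and tB: "tB \<in> {0..1}" "VS VB S (K tB) \<le> VS VB S (C - K tB)"
    and t: "t \<in> {tA..tB}"
  shows "VS VA S (C - K t) \<le> VS VA S (K t) \<and> VS VB S (K t) \<le> VS VB S (C - K t)
    \<and> max (ereal (VS VA S C0)) (max (ereal (VS VA S (C - C1))) (inverse (knife_Loss C K S)))
        \<le> ereal (VS VA S (K t))
    \<and> max (ereal (VS VB S C0)) (max (ereal (VS VB S (C - C1))) (inverse (knife_Loss C K S)))
        \<le> ereal (VS VB S (C - K t))"
proof -
  have knife_fun: "knife_function C K" and K0: "K 0 = C0" and K1: "K 1 = C1"
    using knife by (simp_all add: knife_from_to_def)
  have t01: "t \<in> {0..1}"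
    using t tA tB by auto
  have fin: "finite_measure VA" "finite_measure VB"
    using VA VB by (simp_all add: fin_ac_measure_def)
  have envy_free: "VS VA S (C - K t) \<le> VS VA S (K t)" "VS VB S (K t) \<le> VS VB S (C - K t)"
    using VS_complement_le_VS_after[OF knife_fun fin(1) tA(1) t01 _ tA(2)]
      VS_le_VS_complement_before[OF knife_fun fin(2) t01 tB(1) _ tB(2)] t by auto
  have "C0 \<subseteq> K t" "C - C1 \<subseteq> C - K t"
    using knife_mono[OF knife_fun, of 0 t] knife_mono[OF knife_fun, of t 1] t01 K0 K1 by auto
  then have ends: "VS V S C0 \<le> VS V S (K t)" "VS V S (C - C1) \<le> VS V S (C - K t)"
    if "finite_measure V" for V
    using VS_mono[OF that] by auto
  have "inverse (knife_Loss C K S) \<le> ereal (VS VA S (K t))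
    \<and> inverse (knife_Loss C K S) \<le> ereal (VS VB S (C - K t))"
  proof (cases "knife_Loss C K S")
    case (real l)
    have nonnull: "S_nonnull S (K t)" "S_nonnull S (C - K t)"
      using S_nonnull_after[OF cake pieces knife_fun VA real tA t01]
        S_nonnull_complement_before[OF knife_fun cake pieces VB(1,2,3) real tB t01] t by auto
    show ?thesis
      using inverse_knife_Loss_le_max_VS[OF knife_fun cake pieces VA(1,2) t01 nonnull]
        inverse_knife_Loss_le_max_VS[OF knife_fun cake pieces VB(1,2) t01 nonnull] envy_free
      by (simp add: max_def)
  qed (use fin in \<open>simp_all add: VS_nonneg\<close>)
  then show ?thesis
    using envy_free ends[OF fin(1)] ends[OF fin(2)] by simp
qed

theorem mainTheorem3:
  fixes C C0 C1 :: "'a::euclidean_space set" and S :: "'a set set"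
    and K :: "real \<Rightarrow> 'a set" and vA vB :: "'a \<Rightarrow> real"
  defines "VA \<equiv> value_measure C vA" and "VB \<equiv> value_measure C vB"
  assumes cake: "C \<in> sets borel"
    and pieces: "S \<subseteq> sets borel"
    and C0: "C0 \<in> sets borel" and C1: "C1 \<in> sets borel"
    and sub: "C0 \<subseteq> C1" "C1 \<subseteq> C"
    and knife: "knife_from_to C K C0 C1"
    and good: "S_good C S K"
    and dA: "value_density C vA" and dB: "value_density C vB"
    and normA: "measure VA C = 1" and normB: "measure VB C = 1"
    and hA0: "VS VA S C0 \<le> VS VA S (C - C0)" and hA1: "VS VA S C1 \<ge> VS VA S (C - C1)"
    and hB0: "VS VB S C0 \<le> VS VB S (C - C0)" and hB1: "VS VB S C1 \<ge> VS VB S (C - C1)"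
  shows "(\<exists>t\<in>{0..1}. VS VA S (K t) = VS VA S (C - K t))
       \<and> (\<exists>t\<in>{0..1}. VS VB S (K t) = VS VB S (C - K t))
       \<and> (\<forall>tA\<in>{0..1}. \<forall>tB\<in>{0..1}.
            VS VA S (K tA) = VS VA S (C - K tA) \<longrightarrow> VS VB S (K tB) = VS VB S (C - K tB)
            \<longrightarrow> tA \<le> tB \<longrightarrow>
            (\<forall>t\<in>{tA..tB}.
               VS VA S (K t) \<ge> VS VA S (C - K t)
             \<and> VS VB S (C - K t) \<ge> VS VB S (K t)
             \<and> ereal (VS VA S (K t)) \<ge>
                 max (ereal (VS VA S C0)) (max (ereal (VS VA S (C - C1))) (inverse (knife_Loss C K S)))
             \<and> ereal (VS VB S (C - K t)) \<ge>
                 max (ereal (VS VB S C0)) (max (ereal (VS VB S (C - C1))) (inverse (knife_Loss C K S)))))"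
proof -
  have knife_fun: "knife_function C K" and K0: "K 0 = C0" and K1: "K 1 = C1"
    using knife by (simp_all add: knife_from_to_def)
  have VA: "fin_ac_measure VA" and VB: "fin_ac_measure VB"
    unfolding VA_def VB_def using dA dB by (simp_all add: fin_ac_measure_value_measure)
  have contA: "continuous_on {0..1} (\<lambda>t. VS VA S (K t))" "continuous_on {0..1} (\<lambda>t. VS VA S (C - K t))"
    and contB: "continuous_on {0..1} (\<lambda>t. VS VB S (K t))" "continuous_on {0..1} (\<lambda>t. VS VB S (C - K t))"
    using good VA VB by (simp_all add: S_good_def)
  show ?thesis
    using ex_balanced_cut[OF contA] ex_balanced_cut[OF contB] hA0 hA1 hB0 hB1 K0 K1
      division_between_balanced_cuts[OF cake pieces knife VA normA contA(1) VB normB contB(2)]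
    by auto
qed

end
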